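(* Fix $h\in\{2,\dots,H\}$. Let $\hat f=(\hat w,\hat\phi^F_{h-1},\hat\phi^B_h)$, i.e. $\hat f(x,a,x')=\hat w(\hat\phi^F_{h-1}(x),a,\hat\phi^B_h(x'))$, be the empirical square-loss risk minimizer over $\mathcal{F}_N$ on $n$ i.i.d. samples from $D$, and suppose $\mathbb{E}_D[(\hat f(x,a,x')-f^\star(x,a,x'))^2]\le\Delta_{reg}$ where $\Delta_{reg}=\frac{16(\ln|\Phi_N|+N^2|\mathcal{A}|\ln(n)+\ln(2/\delta))}{n}$. Then for each $i\in[N]$, $$\mathbb{E}_{D_{coup}}\big[1\{\hat\phi^B_h(x_1')=i=\hat\phi^B_h(x_2')\}\,|V(x_1',x_2',x,a)|\big]\le8\sqrt{b_i\Delta_{reg}}.$$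
   Context: Block MDP: horizon $H$; finite latent states $\mathcal{S}=\sqcup_h\mathcal{S}_h$; countable observations $\mathcal{X}=\sqcup_h\mathcal{X}_h$; finite actions $\mathcal{A}$; transitions $T(\cdot\mid s,a)\in\Delta(\mathcal{S}_{h+1})$; emissions $q(\cdot\mid s)\in\Delta(\mathcal{X}_h)$ with disjoint supports, decoder $g^\star$; $T(x'\mid x,a)=q(x'\mid g^\star(x'))T(g^\star(x')\mid g^\star(x),a)$. $\Psi_{h-1}$ is a finite set of policies forming an $\alpha$-policy cover of $\mathcal{S}_{h-1}$ (so $\rho_h>0$ on reachable observations). $D$: draw two independent transitions $(x_j,a_j,x_j')$, each by rolling in to $x_j\in\mathcal{X}_{h-1}$ with a uniformly chosen policy of $\Psi_{h-1}$, $a_j\sim\mathrm{Unf}(\mathcal{A})$, $x_j'\sim T(\cdot\mid x_j,a_j)$; with probability $1/2$ output $(x_1,a_1,x_1',1)$, else $(x_1,a_1,x_2',0)$. $D(x,a)$ denotes the marginal of $(x_1,a_1)$ and $\rho_h$ the marginal of $x_1'$ on $\mathcal{X}_h$ (lifted to states by summing). $f^\star(x,a,x')=\frac{T(g^\star(x')\mid g^\star(x),a)}{T(g^\star(x')\mid g^\star(x),a)+\rho_h(g^\star(x'))}$. $D_{coup}$ is the distribution on $(x,a,x_1',x_2')$ with density $D(x,a)\rho_h(x_1')\rho_h(x_2')$. $V(x_1',x_2',x,a)=\frac{T(g^\star(x_1')\mid g^\star(x),a)}{\rho_h(g^\star(x_1'))}-\frac{T(g^\star(x_2')\mid g^\star(x),a)}{\rho_h(g^\star(x_2'))}$.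 $b_i=\mathbb{E}_{x'\sim\rho_h}[1\{\hat\phi^B_h(x')=i\}]$. $\Phi_N$ is a finite class of maps $\mathcal{X}\to[N]$; $\mathcal{W}_N$ all functions $[N]\times\mathcal{A}\times[N]\to[0,1]$; $\mathcal{F}_N=\{(x,a,x')\mapsto w(\phi^F(x),a,\phi^B(x'))\}$; $\delta\in(0,1)$. *)

theory Defs
  imports "HOL-Probability.Probability"
begin

text \<open>Latent states of type 's (finite), observations of type 'x (countable),
actions of type 'a (finite).  lvl s is the layer index of state s (layers 1..H),
mu0 the initial state distribution (on layer 1), Tr s a the latent transition T(. | s,a),
q s the emission distribution, g the decoder g*.  The observation layer X_h is
the set of x with lvl (g x) = h.\<close>

definition block_mdp ::
  "nat \<Rightarrow> ('s \<Rightarrow> nat) \<Rightarrow> 's pmf \<Rightarrow> ('s \<Rightarrow> 'a \<Rightarrow> 's pmf) \<Rightarrow> ('s \<Rightarrow> 'x pmf) \<Rightarrow> ('x \<Rightarrow> 's) \<Rightarrow> bool"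
where
  "block_mdp H lvl mu0 Tr q g \<longleftrightarrow>
     (\<forall>s. 1 \<le> lvl s \<and> lvl s \<le> H) \<and>
     (\<forall>s\<in>set_pmf mu0. lvl s = 1) \<and>
     (\<forall>s a. lvl s < H \<longrightarrow> (\<forall>s'\<in>set_pmf (Tr s a). lvl s' = lvl s + 1)) \<and>
     (\<forall>s. \<forall>x\<in>set_pmf (q s). g x = s)"

definition obsT ::
  "('s \<Rightarrow> 'a \<Rightarrow> 's pmf) \<Rightarrow> ('s \<Rightarrow> 'x pmf) \<Rightarrow> ('x \<Rightarrow> 's) \<Rightarrow> 'x \<Rightarrow> 'a \<Rightarrow> 'x pmf"
where
  "obsT Tr q g x a = bind_pmf (Tr (g x) a) q"

text \<open>Distribution of the observation x_k (k >= 1) when executing the (randomized)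
policy p from the start; index 0 is a junk copy of index 1.\<close>
primrec roll_in ::
  "'s pmf \<Rightarrow> ('s \<Rightarrow> 'a \<Rightarrow> 's pmf) \<Rightarrow> ('s \<Rightarrow> 'x pmf) \<Rightarrow> ('x \<Rightarrow> 's) \<Rightarrow> ('x \<Rightarrow> 'a pmf) \<Rightarrow> nat \<Rightarrow> 'x pmf"
where
  "roll_in mu0 Tr q g p 0 = bind_pmf mu0 q"
| "roll_in mu0 Tr q g p (Suc k) =
     (if k = 0 then bind_pmf mu0 q
      else bind_pmf (roll_in mu0 Tr q g p k) (\<lambda>x. bind_pmf (p x) (\<lambda>a. obsT Tr q g x a)))"

definition visit_prob ::
  "'s pmf \<Rightarrow> ('s \<Rightarrow> 'a \<Rightarrow> 's pmf) \<Rightarrow> ('s \<Rightarrow> 'x pmf) \<Rightarrow> ('x \<Rightarrow> 's) \<Rightarrow> ('x \<Rightarrow> 'a pmf) \<Rightarrow> nat \<Rightarrow> 's \<Rightarrow> real"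
where
  "visit_prob mu0 Tr q g p k s = measure_pmf.prob (roll_in mu0 Tr q g p k) {x. g x = s}"

definition policy_cover ::
  "('s \<Rightarrow> nat) \<Rightarrow> 's pmf \<Rightarrow> ('s \<Rightarrow> 'a \<Rightarrow> 's pmf) \<Rightarrow> ('s \<Rightarrow> 'x pmf) \<Rightarrow> ('x \<Rightarrow> 's)
   \<Rightarrow> real \<Rightarrow> ('x \<Rightarrow> 'a pmf) set \<Rightarrow> nat \<Rightarrow> bool"
where
  "policy_cover lvl mu0 Tr q g \<alpha> Psi k \<longleftrightarrow>
     (\<forall>s. lvl s = k \<longrightarrow>
        (\<exists>p\<in>Psi. visit_prob mu0 Tr q g p k s \<ge> \<alpha> * (SUP p'. visit_prob mu0 Tr q g p' k s)))"

definition D_xa ::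
  "'s pmf \<Rightarrow> ('s \<Rightarrow> 'a::finite \<Rightarrow> 's pmf) \<Rightarrow> ('s \<Rightarrow> 'x pmf) \<Rightarrow> ('x \<Rightarrow> 's) \<Rightarrow> ('x \<Rightarrow> 'a pmf) set \<Rightarrow> nat
   \<Rightarrow> ('x \<times> 'a) pmf"
where
  "D_xa mu0 Tr q g Psi h =
     bind_pmf (pmf_of_set Psi) (\<lambda>p.
     bind_pmf (roll_in mu0 Tr q g p (h - 1)) (\<lambda>x.
     bind_pmf (pmf_of_set UNIV) (\<lambda>a. return_pmf (x, a))))"

definition rho ::
  "'s pmf \<Rightarrow> ('s \<Rightarrow> 'a::finite \<Rightarrow> 's pmf) \<Rightarrow> ('s \<Rightarrow> 'x pmf) \<Rightarrow> ('x \<Rightarrow> 's) \<Rightarrow> ('x \<Rightarrow> 'a pmf) set \<Rightarrow> nat \<Rightarrow> 'x pmf"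
where
  "rho mu0 Tr q g Psi h = bind_pmf (D_xa mu0 Tr q g Psi h) (\<lambda>(x, a). obsT Tr q g x a)"

definition rho_s ::
  "'s pmf \<Rightarrow> ('s \<Rightarrow> 'a::finite \<Rightarrow> 's pmf) \<Rightarrow> ('s \<Rightarrow> 'x pmf) \<Rightarrow> ('x \<Rightarrow> 's) \<Rightarrow> ('x \<Rightarrow> 'a pmf) set \<Rightarrow> nat \<Rightarrow> 's \<Rightarrow> real"
where
  "rho_s mu0 Tr q g Psi h s = measure_pmf.prob (rho mu0 Tr q g Psi h) {x. g x = s}"

definition f_star ::
  "'s pmf \<Rightarrow> ('s \<Rightarrow> 'a::finite \<Rightarrow> 's pmf) \<Rightarrow> ('s \<Rightarrow> 'x pmf) \<Rightarrow> ('x \<Rightarrow> 's) \<Rightarrow> ('x \<Rightarrow> 'a pmf) set \<Rightarrow> nat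
   \<Rightarrow> 'x \<Rightarrow> 'a \<Rightarrow> 'x \<Rightarrow> real"
where
  "f_star mu0 Tr q g Psi h x a x' =
     pmf (Tr (g x) a) (g x') / (pmf (Tr (g x) a) (g x') + rho_s mu0 Tr q g Psi h (g x'))"

definition D_dist ::
  "'s pmf \<Rightarrow> ('s \<Rightarrow> 'a::finite \<Rightarrow> 's pmf) \<Rightarrow> ('s \<Rightarrow> 'x pmf) \<Rightarrow> ('x \<Rightarrow> 's) \<Rightarrow> ('x \<Rightarrow> 'a pmf) set \<Rightarrow> nat
   \<Rightarrow> ('x \<times> 'a \<times> 'x \<times> real) pmf"
where
  "D_dist mu0 Tr q g Psi h =
     bind_pmf (D_xa mu0 Tr q g Psi h) (\<lambda>(x1, a1).
     bind_pmf (obsT Tr q g x1 a1) (\<lambda>x1'.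
     bind_pmf (D_xa mu0 Tr q g Psi h) (\<lambda>(x2, a2).
     bind_pmf (obsT Tr q g x2 a2) (\<lambda>x2'.
     bind_pmf (bernoulli_pmf (1/2)) (\<lambda>c.
       return_pmf (if c then (x1, a1, x1', 1) else (x1, a1, x2', 0)))))))"

definition D_coup ::
  "'s pmf \<Rightarrow> ('s \<Rightarrow> 'a::finite \<Rightarrow> 's pmf) \<Rightarrow> ('s \<Rightarrow> 'x pmf) \<Rightarrow> ('x \<Rightarrow> 's) \<Rightarrow> ('x \<Rightarrow> 'a pmf) set \<Rightarrow> nat
   \<Rightarrow> ('x \<times> 'a \<times> 'x \<times> 'x) pmf"
where
  "D_coup mu0 Tr q g Psi h =
     bind_pmf (D_xa mu0 Tr q g Psi h) (\<lambda>(x, a).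
     bind_pmf (rho mu0 Tr q g Psi h) (\<lambda>x1'.
     bind_pmf (rho mu0 Tr q g Psi h) (\<lambda>x2'. return_pmf (x, a, x1', x2'))))"

definition V_fun ::
  "'s pmf \<Rightarrow> ('s \<Rightarrow> 'a::finite \<Rightarrow> 's pmf) \<Rightarrow> ('s \<Rightarrow> 'x pmf) \<Rightarrow> ('x \<Rightarrow> 's) \<Rightarrow> ('x \<Rightarrow> 'a pmf) set \<Rightarrow> nat
   \<Rightarrow> 'x \<Rightarrow> 'x \<Rightarrow> 'x \<Rightarrow> 'a \<Rightarrow> real"
where
  "V_fun mu0 Tr q g Psi h x1' x2' x a =
     pmf (Tr (g x) a) (g x1') / rho_s mu0 Tr q g Psi h (g x1')
   - pmf (Tr (g x) a) (g x2') / rho_s mu0 Tr q g Psi h (g x2')"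

definition W_N :: "nat \<Rightarrow> (nat \<Rightarrow> 'a \<Rightarrow> nat \<Rightarrow> real) set" where
  "W_N N = {w. \<forall>i\<in>{1..N}. \<forall>a. \<forall>j\<in>{1..N}. 0 \<le> w i a j \<and> w i a j \<le> 1}"

definition F_N :: "('x \<Rightarrow> nat) set \<Rightarrow> nat \<Rightarrow> ('x \<times> 'a \<times> 'x \<Rightarrow> real) set" where
  "F_N Phi N = {f. \<exists>phiF\<in>Phi. \<exists>phiB\<in>Phi. \<exists>w\<in>W_N N.
                   f = (\<lambda>(x, a, x'). w (phiF x) a (phiB x'))}"

end

theory Submission
  imports Defs
begin

(* Let P = T(g x' | g x, a) / rho_h(g x') be the density of T(. | x, a) with respect to rho_h.
   Then f* = P / (1 + P) and V = P1 - P2 = (f*1 - f*2) (1 + P1) (1 + P2).  On the cell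
   phiB = i the predictor w_hat (phiF x) a i does not depend on x', so |f*1 - f*2| is at most
   the sum e1 + e2 of the regression errors, and the D_coup-expectation is at most
   2 E_D(x,a) [G K] with G = E_rho[1_S e (1 + P)] and K = E_rho[1_S (1 + P)] = b_i + T(S | x, a) <= 2.
   The weight 1 + P turns a rho_h-integral into one under rho_h + T(. | x, a), which is twice the
   conditional law of x' given (x, a) under D; so AM-GM with a free scale l bounds the expectation by 2 l Delta + 8 b_i / l,
   and optimizing over l gives 8 sqrt (b_i Delta). *)

lemma abs_diff_le_odds_error:
  fixes p1 p2 c :: real
  assumes "0 \<le> p1" "0 \<le> p2"
  shows "\<bar>p1 - p2\<bar> \<le> (\<bar>c - p1 / (1 + p1)\<bar> + \<bar>c - p2 / (1 + p2)\<bar>) * (1 + p1) * (1 + p2)"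
proof -
  have "1 + p1 \<noteq> 0" "1 + p2 \<noteq> 0" using assms by auto
  then have "p1 - p2 = (p1 / (1 + p1) - p2 / (1 + p2)) * ((1 + p1) * (1 + p2))"
    by (simp add: divide_simps) algebra
  moreover have "\<bar>p1 / (1 + p1) - p2 / (1 + p2)\<bar> \<le> \<bar>c - p1 / (1 + p1)\<bar> + \<bar>c - p2 / (1 + p2)\<bar>"
    by linarith
  ultimately show ?thesis
    using assms by (simp add: abs_mult mult.assoc mult_right_mono)
qed

lemma two_mult_le_scaled_squares:
  fixes a b l :: real
  assumes "0 < l"
  shows "2 * (a * b) \<le> l * a\<^sup>2 + b\<^sup>2 / l"
proof -
  have "0 \<le> (l * a - b)\<^sup>2 / l" using assms by simp
  also have "\<dots> = l * a\<^sup>2 + b\<^sup>2 / l - 2 * (a * b)"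
    using assms by (simp add: field_simps power2_eq_square)
  finally show ?thesis by simp
qed

lemma le_two_sqrt_mult_of_forall_pos_le:
  fixes x A B :: real
  assumes le: "\<And>l. 0 < l \<Longrightarrow> x \<le> l * A + B / l" and "0 \<le> A" "0 \<le> B"
  shows "x \<le> 2 * sqrt (A * B)"
proof -
  have "x \<le> 2 * sqrt ((A + \<epsilon>) * (B + \<epsilon>))" if "0 < \<epsilon>" for \<epsilon> :: real
  proof -
    define a b where "a = sqrt (A + \<epsilon>)" and "b = sqrt (B + \<epsilon>)"
    have ab: "0 < a" "0 < b" "a\<^sup>2 = A + \<epsilon>" "b\<^sup>2 = B + \<epsilon>"
      using assms that by (simp_all add: a_def b_def)
    have l: "0 < b / a" using ab by simp
    have "x \<le> b / a * A + B / (b / a)" using le[OF l] .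
    also have "\<dots> \<le> b / a * a\<^sup>2 + b\<^sup>2 / (b / a)"
      unfolding ab using l that by (intro add_mono mult_left_mono divide_right_mono) auto
    also have "\<dots> = 2 * (a * b)"
      using ab(1,2) by (simp add: field_simps power2_eq_square)
    also have "\<dots> = 2 * sqrt ((A + \<epsilon>) * (B + \<epsilon>))"
      by (simp add: a_def b_def real_sqrt_mult)
    finally show ?thesis .
  qed
  then have ev: "\<forall>\<^sub>F \<epsilon> in at_right 0. x \<le> 2 * sqrt ((A + \<epsilon>) * (B + \<epsilon>))"
    using eventually_at_right_less[of "0::real"] by (auto elim: eventually_mono)
  have lim: "((\<lambda>\<epsilon>. 2 * sqrt ((A + \<epsilon>) * (B + \<epsilon>))) \<longlongrightarrow> 2 * sqrt (A * B)) (at_right 0)"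
    by (auto intro!: tendsto_eq_intros)
  show ?thesis
    using tendsto_lowerbound[OF lim ev] by simp
qed

lemma nn_integral_pmf_symmetrized_product:
  fixes M :: "'x pmf" and a k :: "'x \<Rightarrow> real"
  assumes "\<And>x. 0 \<le> a x" "\<And>x. 0 \<le> k x"
  shows "(\<integral>\<^sup>+x1. \<integral>\<^sup>+x2. ennreal (a x1 * k x2 + k x1 * a x2) \<partial>M \<partial>M)
       = 2 * (\<integral>\<^sup>+x. ennreal (a x) \<partial>M) * (\<integral>\<^sup>+x. ennreal (k x) \<partial>M)"
  using assms
  by (simp add: ennreal_mult nn_integral_add nn_integral_cmult nn_integral_multc mult_2 algebra_simps)

(* In the application Dx = D(x,a), Ob (x, a) = T(. | x, a), R = rho_h, and P z is the density of
   Ob z with respect to R. *)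
locale mixture_density_ratio =
  fixes Dx :: "'z pmf" and Ob :: "'z \<Rightarrow> 'x pmf" and R :: "'x pmf" and P :: "'z \<Rightarrow> 'x \<Rightarrow> real"
  assumes R_eq: "R = bind_pmf Dx Ob"
    and P_nonneg: "\<And>z x. 0 \<le> P z x"
    and pmf_component: "\<And>z x. z \<in> set_pmf Dx \<Longrightarrow> pmf (Ob z) x = P z x * pmf R x"
begin

lemma nn_integral_component:
  "z \<in> set_pmf Dx \<Longrightarrow> (\<integral>\<^sup>+x. f x \<partial>Ob z) = (\<integral>\<^sup>+x. ennreal (P z x) * f x \<partial>R)"
  by (simp add: nn_integral_measure_pmf pmf_component ennreal_mult P_nonneg ac_simps)

lemma nn_integral_one_plus_density:
  assumes "z \<in> set_pmf Dx" and "\<And>x. 0 \<le> F x"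
  shows "(\<integral>\<^sup>+x. ennreal (F x * (1 + P z x)) \<partial>R) = (\<integral>\<^sup>+x. F x \<partial>R) + (\<integral>\<^sup>+x. F x \<partial>Ob z)"
  using assms P_nonneg
  by (simp add: nn_integral_component distrib_left ennreal_mult nn_integral_add mult.commute)

lemma nn_integral_amgm_le:
  assumes z: "z \<in> set_pmf Dx" and e: "\<And>x. 0 \<le> e x" and l: "0 < l" and k: "0 \<le> k"
  shows "2 * (\<integral>\<^sup>+x. ennreal (indicator S x * e x * (1 + P z x)) \<partial>R) * ennreal k
       \<le> ennreal l * ((\<integral>\<^sup>+x. ennreal ((e x)\<^sup>2) \<partial>R) + (\<integral>\<^sup>+x. ennreal ((e x)\<^sup>2) \<partial>Ob z))
         + ennreal (k\<^sup>2 / l) * (emeasure R S + emeasure (Ob z) S)"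
proof -
  have amgm: "2 * (indicator S x * e x) * k * (1 + P z x)
      \<le> l * ((e x)\<^sup>2 * (1 + P z x)) + k\<^sup>2 / l * (indicator S x * (1 + P z x))" for x
  proof -
    have "2 * (indicator S x * e x) * k \<le> l * (e x)\<^sup>2 + indicator S x * (k\<^sup>2 / l)"
      using two_mult_le_scaled_squares[OF l, of "e x" k] l by (cases "x \<in> S") auto
    from mult_right_mono[OF this, of "1 + P z x"] show ?thesis
      using P_nonneg[of z x] by (simp add: algebra_simps add_divide_distrib)
  qed
  have "2 * (\<integral>\<^sup>+x. ennreal (indicator S x * e x * (1 + P z x)) \<partial>R) * ennreal k
      = (\<integral>\<^sup>+x. ennreal (2 * (indicator S x * e x) * k * (1 + P z x)) \<partial>R)"
    using e P_nonneg k
    by (simp add: nn_integral_cmult[symmetric] nn_integral_multc[symmetric] numeral_mult_ennreal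
        ennreal_mult[symmetric] ac_simps)
  also have "\<dots> \<le> (\<integral>\<^sup>+x. ennreal (l * ((e x)\<^sup>2 * (1 + P z x)) + k\<^sup>2 / l * (indicator S x * (1 + P z x))) \<partial>R)"
    by (intro nn_integral_mono ennreal_leI amgm)
  also have "\<dots> = (\<integral>\<^sup>+x. ennreal l * ennreal ((e x)\<^sup>2 * (1 + P z x))
                       + ennreal (k\<^sup>2 / l) * ennreal (indicator S x * (1 + P z x)) \<partial>R)"
    using l P_nonneg[of z]
    by (intro nn_integral_cong) (simp add: ennreal_mult[symmetric] ennreal_plus[symmetric] del: ennreal_plus)
  also have "\<dots> = ennreal l * ((\<integral>\<^sup>+x. ennreal ((e x)\<^sup>2) \<partial>R) + (\<integral>\<^sup>+x. ennreal ((e x)\<^sup>2) \<partial>Ob z))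
                   + ennreal (k\<^sup>2 / l) * (emeasure R S + emeasure (Ob z) S)"
    by (simp add: nn_integral_add nn_integral_cmult nn_integral_one_plus_density[OF z] ennreal_indicator)
  finally show ?thesis .
qed

lemma nn_integral_weighted_pairs_le:
  assumes z: "z \<in> set_pmf Dx" and e: "\<And>x. 0 \<le> e x" and l: "0 < l"
  shows "(\<integral>\<^sup>+x1. \<integral>\<^sup>+x2. ennreal (indicator S x1 * indicator S x2 * (e x1 + e x2)
                                      * (1 + P z x1) * (1 + P z x2)) \<partial>R \<partial>R)
       \<le> ennreal l * ((\<integral>\<^sup>+x. ennreal ((e x)\<^sup>2) \<partial>R) + (\<integral>\<^sup>+x. ennreal ((e x)\<^sup>2) \<partial>Ob z))
         + ennreal (4 / l) * (emeasure R S + emeasure (Ob z) S)"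
proof -
  define k where "k = measure R S + measure (Ob z) S"
  have mass: "emeasure R S + emeasure (Ob z) S = ennreal k"
    by (simp add: k_def measure_pmf.emeasure_eq_measure)
  have k: "0 \<le> k" "k \<le> 2"
    unfolding k_def using add_mono[OF measure_pmf.prob_le_1[of R S] measure_pmf.prob_le_1[of "Ob z" S]]
    by simp_all
  then have k_sq: "k\<^sup>2 \<le> 2\<^sup>2"
    by (intro power_mono)
  have mass_integral: "(\<integral>\<^sup>+x. ennreal (indicator S x * (1 + P z x)) \<partial>R) = ennreal k"
    using nn_integral_one_plus_density[OF z, of "indicator S"] mass by (simp add: ennreal_indicator)
  have "(\<integral>\<^sup>+x1. \<integral>\<^sup>+x2. ennreal (indicator S x1 * indicator S x2 * (e x1 + e x2)
                                      * (1 + P z x1) * (1 + P z x2)) \<partial>R \<partial>R)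
      = 2 * (\<integral>\<^sup>+x. ennreal (indicator S x * e x * (1 + P z x)) \<partial>R) * ennreal k"
    unfolding mass_integral[symmetric] using e P_nonneg
    by (subst nn_integral_pmf_symmetrized_product[symmetric]) (simp_all add: algebra_simps)
  also have "\<dots> \<le> ennreal l * ((\<integral>\<^sup>+x. ennreal ((e x)\<^sup>2) \<partial>R) + (\<integral>\<^sup>+x. ennreal ((e x)\<^sup>2) \<partial>Ob z))
                   + ennreal (k\<^sup>2 / l) * ennreal k"
    using nn_integral_amgm_le[where e = e and S = S, OF z e l k(1)] mass by simp
  also have "\<dots> \<le> ennreal l * ((\<integral>\<^sup>+x. ennreal ((e x)\<^sup>2) \<partial>R) + (\<integral>\<^sup>+x. ennreal ((e x)\<^sup>2) \<partial>Ob z))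
                   + ennreal (4 / l) * ennreal k"
    using k k_sq l by (intro add_left_mono mult_right_mono ennreal_leI divide_right_mono) auto
  finally show ?thesis
    by (simp add: mass)
qed

lemma nn_integral_emeasure_component: "(\<integral>\<^sup>+z. emeasure (Ob z) S \<partial>Dx) = emeasure R S"
  by (simp add: R_eq)

lemma nn_integral_mixture_weighted_pairs_le:
  assumes e: "\<And>z x. 0 \<le> e z x" and l: "0 < l"
  shows "(\<integral>\<^sup>+z. \<integral>\<^sup>+x1. \<integral>\<^sup>+x2. ennreal (indicator S x1 * indicator S x2 * (e z x1 + e z x2)
                                      * (1 + P z x1) * (1 + P z x2)) \<partial>R \<partial>R \<partial>Dx)
       \<le> ennreal l * ((\<integral>\<^sup>+z. \<integral>\<^sup>+x. ennreal ((e z x)\<^sup>2) \<partial>R \<partial>Dx)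
                      + (\<integral>\<^sup>+z. \<integral>\<^sup>+x. ennreal ((e z x)\<^sup>2) \<partial>Ob z \<partial>Dx))
         + ennreal (8 / l) * emeasure R S"
proof -
  have "(\<integral>\<^sup>+z. \<integral>\<^sup>+x1. \<integral>\<^sup>+x2. ennreal (indicator S x1 * indicator S x2 * (e z x1 + e z x2)
                                      * (1 + P z x1) * (1 + P z x2)) \<partial>R \<partial>R \<partial>Dx)
      \<le> (\<integral>\<^sup>+z. ennreal l * ((\<integral>\<^sup>+x. ennreal ((e z x)\<^sup>2) \<partial>R) + (\<integral>\<^sup>+x. ennreal ((e z x)\<^sup>2) \<partial>Ob z))
                 + ennreal (4 / l) * (emeasure R S + emeasure (Ob z) S) \<partial>Dx)"
    using e l by (intro nn_integral_mono_AE) (simp add: AE_measure_pmf_iff nn_integral_weighted_pairs_le)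
  also have "\<dots> = ennreal l * ((\<integral>\<^sup>+z. \<integral>\<^sup>+x. ennreal ((e z x)\<^sup>2) \<partial>R \<partial>Dx)
                                + (\<integral>\<^sup>+z. \<integral>\<^sup>+x. ennreal ((e z x)\<^sup>2) \<partial>Ob z \<partial>Dx))
                   + ennreal (4 / l) * (emeasure R S + emeasure R S)"
    by (simp add: nn_integral_add nn_integral_cmult nn_integral_emeasure_component)
  also have "ennreal (4 / l) * (emeasure R S + emeasure R S) = ennreal (8 / l) * emeasure R S"
  proof -
    have "ennreal (8 / l) = 2 * ennreal (4 / l)" using l by (simp add: numeral_mult_ennreal)
    then show ?thesis by (simp add: mult_2[symmetric] ac_simps)
  qed
  finally show ?thesis .
qed

theorem enn2real_density_ratio_gap_le:
  fixes u f :: "'z \<Rightarrow> 'x \<Rightarrow> real" and \<epsilon> :: real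
  assumes f_eq: "\<And>z x. x \<in> set_pmf R \<Longrightarrow> f z x = P z x / (1 + P z x)"
    and u_const: "\<And>z x1 x2. x1 \<in> S \<Longrightarrow> x2 \<in> S \<Longrightarrow> u z x1 = u z x2"
    and err: "(\<integral>\<^sup>+z. \<integral>\<^sup>+x. ennreal ((u z x - f z x)\<^sup>2) \<partial>R \<partial>Dx)
              + (\<integral>\<^sup>+z. \<integral>\<^sup>+x. ennreal ((u z x - f z x)\<^sup>2) \<partial>Ob z \<partial>Dx) \<le> ennreal (2 * \<epsilon>)"
    and \<epsilon>: "0 \<le> \<epsilon>"
  shows "enn2real (\<integral>\<^sup>+z. \<integral>\<^sup>+x1. \<integral>\<^sup>+x2. ennreal (indicator S x1 * indicator S x2 * \<bar>P z x1 - P z x2\<bar>)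
                     \<partial>R \<partial>R \<partial>Dx)
         \<le> 8 * sqrt (measure R S * \<epsilon>)"
    (is "enn2real ?gap \<le> _")
proof -
  define e where "e z x = \<bar>u z x - f z x\<bar>" for z x
  have gap_le: "indicator S x1 * indicator S x2 * \<bar>P z x1 - P z x2\<bar>
      \<le> indicator S x1 * indicator S x2 * (e z x1 + e z x2) * (1 + P z x1) * (1 + P z x2)"
    if "z \<in> set_pmf Dx" "x1 \<in> set_pmf R" "x2 \<in> set_pmf R" for z x1 x2
  proof (cases "x1 \<in> S \<and> x2 \<in> S")
    case True
    then show ?thesis
      using abs_diff_le_odds_error[OF P_nonneg P_nonneg, of z x1 z x2 "u z x1"] u_const[of x1 x2 z] f_eq that
      by (simp add: e_def)
  qed (auto simp: indicator_def)
  have "?gap \<le> ennreal (l * (2 * \<epsilon>) + 8 * measure R S / l)" if l: "0 < l" for l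
  proof -
    have "?gap \<le> (\<integral>\<^sup>+z. \<integral>\<^sup>+x1. \<integral>\<^sup>+x2. ennreal (indicator S x1 * indicator S x2 * (e z x1 + e z x2)
                                      * (1 + P z x1) * (1 + P z x2)) \<partial>R \<partial>R \<partial>Dx)"
      by (auto simp: AE_measure_pmf_iff intro!: nn_integral_mono_AE ennreal_leI gap_le)
    also have "\<dots> \<le> ennreal l * ((\<integral>\<^sup>+z. \<integral>\<^sup>+x. ennreal ((u z x - f z x)\<^sup>2) \<partial>R \<partial>Dx)
                                + (\<integral>\<^sup>+z. \<integral>\<^sup>+x. ennreal ((u z x - f z x)\<^sup>2) \<partial>Ob z \<partial>Dx))
                     + ennreal (8 / l) * emeasure R S"
      using nn_integral_mixture_weighted_pairs_le[of e l S] l by (simp add: e_def)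
    also have "\<dots> \<le> ennreal l * ennreal (2 * \<epsilon>) + ennreal (8 / l) * emeasure R S"
      using err by (intro add_right_mono mult_left_mono) auto
    also have "\<dots> = ennreal (l * (2 * \<epsilon>) + 8 * measure R S / l)"
      using l \<epsilon> by (simp add: measure_pmf.emeasure_eq_measure ennreal_mult[symmetric] ennreal_plus[symmetric] del: ennreal_plus)
    finally show ?thesis .
  qed
  then have "enn2real ?gap \<le> l * (2 * \<epsilon>) + 8 * measure R S / l" if "0 < l" for l
    using that \<epsilon> by (intro enn2real_leI) auto
  then have "enn2real ?gap \<le> 2 * sqrt ((2 * \<epsilon>) * (8 * measure R S))"
    by (rule le_two_sqrt_mult_of_forall_pos_le) (use \<epsilon> in auto)
  also have "\<dots> = 8 * sqrt (measure R S * \<epsilon>)"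
  proof -
    have "(2 * \<epsilon>) * (8 * measure R S) = 4\<^sup>2 * (measure R S * \<epsilon>)" by simp
    then show ?thesis by (simp only: real_sqrt_mult) simp
  qed
  finally show ?thesis .
qed

end

lemma nn_integral_D_dist:
  fixes F :: "'x \<Rightarrow> 'a::finite \<Rightarrow> 'x \<Rightarrow> ennreal"
  shows "2 * (\<integral>\<^sup>+w. F (fst w) (fst (snd w)) (fst (snd (snd w))) \<partial>D_dist mu0 Tr q g Psi h)
       = (\<integral>\<^sup>+z. \<integral>\<^sup>+x'. F (fst z) (snd z) x' \<partial>rho mu0 Tr q g Psi h \<partial>D_xa mu0 Tr q g Psi h)
       + (\<integral>\<^sup>+z. \<integral>\<^sup>+x'. F (fst z) (snd z) x' \<partial>obsT Tr q g (fst z) (snd z) \<partial>D_xa mu0 Tr q g Psi h)"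
proof -
  have half: "2 * (x * inverse 2) = x" for x :: ennreal
    using ennreal_mult_divide_eq[of "2::ennreal" x]
    by (simp add: divide_ennreal_def[symmetric] ennreal_times_divide mult.commute)
  show ?thesis
    unfolding D_dist_def
    by (simp add: case_prod_unfold nn_integral_add nn_integral_cmult nn_integral_multc rho_def
        distrib_left half add.commute)
qed

lemma f_star_nonneg_le_one:
  "0 \<le> f_star mu0 Tr q g Psi h x a x' \<and> f_star mu0 Tr q g Psi h x a x' \<le> 1"
proof -
  have "0 \<le> t / (t + r) \<and> t / (t + r) \<le> 1" if "0 \<le> t" "0 \<le> r" for t r :: real
    using that by (cases "t + r = 0") (auto simp: divide_le_eq_1)
  then show ?thesis
    by (simp add: f_star_def rho_s_def)
qed

lemma nn_integral_regression_error_le: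
  fixes u :: "'x \<Rightarrow> 'a::finite \<Rightarrow> 'x \<Rightarrow> real"
  assumes u_range: "\<And>x a x'. 0 \<le> u x a x' \<and> u x a x' \<le> 1"
    and err: "measure_pmf.expectation (D_dist mu0 Tr q g Psi h)
                (\<lambda>(x, a, x', y). (u x a x' - f_star mu0 Tr q g Psi h x a x')\<^sup>2) \<le> \<Delta>"
  shows "(\<integral>\<^sup>+z. \<integral>\<^sup>+x'. ennreal ((u (fst z) (snd z) x' - f_star mu0 Tr q g Psi h (fst z) (snd z) x')\<^sup>2)
            \<partial>rho mu0 Tr q g Psi h \<partial>D_xa mu0 Tr q g Psi h)
       + (\<integral>\<^sup>+z. \<integral>\<^sup>+x'. ennreal ((u (fst z) (snd z) x' - f_star mu0 Tr q g Psi h (fst z) (snd z) x')\<^sup>2)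
            \<partial>obsT Tr q g (fst z) (snd z) \<partial>D_xa mu0 Tr q g Psi h)
       \<le> ennreal (2 * \<Delta>)"
proof -
  define sq_err where "sq_err x a x' = (u x a x' - f_star mu0 Tr q g Psi h x a x')\<^sup>2" for x a x'
  let ?sq_err = "\<lambda>w. sq_err (fst w) (fst (snd w)) (fst (snd (snd w)))"
  have sq_err_range: "0 \<le> sq_err x a x' \<and> sq_err x a x' \<le> 1" for x a x'
    using u_range[of x a x'] f_star_nonneg_le_one[of mu0 Tr q g Psi h x a x']
    by (auto simp: sq_err_def abs_square_le_1 abs_le_iff)
  have "(\<integral>\<^sup>+w. ennreal (?sq_err w) \<partial>D_dist mu0 Tr q g Psi h)
      = ennreal (measure_pmf.expectation (D_dist mu0 Tr q g Psi h) ?sq_err)"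
    using sq_err_range by (intro nn_integral_eq_integral measure_pmf.integrable_const_bound[where B=1]) auto
  also have "\<dots> \<le> ennreal \<Delta>"
    using err by (intro ennreal_leI) (simp add: sq_err_def case_prod_unfold)
  finally have "2 * (\<integral>\<^sup>+w. ennreal (?sq_err w) \<partial>D_dist mu0 Tr q g Psi h) \<le> 2 * ennreal \<Delta>"
    by (rule mult_left_mono) simp
  also have "2 * ennreal \<Delta> \<le> ennreal (2 * \<Delta>)"
    by (cases "0 \<le> \<Delta>") (simp_all add: numeral_mult_ennreal ennreal_neg)
  finally show ?thesis
    unfolding nn_integral_D_dist[where F = "\<lambda>x a x'. ennreal (sq_err x a x')"] by (simp add: sq_err_def)
qed

context
  fixes mu0 :: "'s pmf" and Tr :: "'s \<Rightarrow> 'a::finite \<Rightarrow> 's pmf" and q :: "'s \<Rightarrow> 'x pmf"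
    and g :: "'x \<Rightarrow> 's" and Psi :: "('x \<Rightarrow> 'a pmf) set" and h :: nat
  assumes decoder: "\<forall>s. \<forall>x\<in>set_pmf (q s). g x = s"
begin

lemma pmf_bind_emission: "pmf (bind_pmf M q) x = pmf M (g x) * pmf (q (g x)) x"
proof -
  have "pmf (bind_pmf M q) x = (\<integral>s. pmf (q s) x \<partial>measure_pmf M)" by (rule pmf_bind)
  also have "\<dots> = (\<Sum>s\<in>{g x}. pmf (q s) x * pmf M s)"
    using decoder by (intro integral_measure_pmf_real) (auto simp: set_pmf_eq)
  finally show ?thesis by simp
qed

lemma map_pmf_decoder_bind_emission: "map_pmf g (bind_pmf M q) = M"
proof -
  have "map_pmf g (q s) = return_pmf s" for s
    using decoder by (simp add: map_pmf_eq_return_pmf_iff)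
  then show ?thesis by (simp add: map_bind_pmf bind_return_pmf')
qed

lemma pmf_rho: "pmf (rho mu0 Tr q g Psi h) x = rho_s mu0 Tr q g Psi h (g x) * pmf (q (g x)) x"
proof -
  define M where "M = bind_pmf (D_xa mu0 Tr q g Psi h) (\<lambda>z. Tr (g (fst z)) (snd z))"
  have rho_eq: "rho mu0 Tr q g Psi h = bind_pmf M q"
    unfolding rho_def M_def obsT_def by (simp add: bind_assoc_pmf case_prod_unfold)
  have "rho_s mu0 Tr q g Psi h s = pmf (map_pmf g (rho mu0 Tr q g Psi h)) s" for s
    unfolding rho_s_def pmf_map by (simp add: vimage_def)
  then show ?thesis
    unfolding rho_eq map_pmf_decoder_bind_emission pmf_bind_emission by simp
qed

lemma rho_s_pos: "x \<in> set_pmf (rho mu0 Tr q g Psi h) \<Longrightarrow> 0 < rho_s mu0 Tr q g Psi h (g x)"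
  using pmf_rho[of x] by (auto simp: set_pmf_iff rho_s_def zero_less_measure_iff)

lemma mixture_density_ratio_rho:
  "mixture_density_ratio (D_xa mu0 Tr q g Psi h) (\<lambda>z. obsT Tr q g (fst z) (snd z)) (rho mu0 Tr q g Psi h)
     (\<lambda>z x. pmf (Tr (g (fst z)) (snd z)) (g x) / rho_s mu0 Tr q g Psi h (g x))"
proof
  show "rho mu0 Tr q g Psi h = bind_pmf (D_xa mu0 Tr q g Psi h) (\<lambda>z. obsT Tr q g (fst z) (snd z))"
    by (simp add: rho_def case_prod_unfold)
  show "0 \<le> pmf (Tr (g (fst z)) (snd z)) (g x) / rho_s mu0 Tr q g Psi h (g x)" for z x
    by (simp add: rho_s_def)
  show "pmf (obsT Tr q g (fst z) (snd z)) x
      = pmf (Tr (g (fst z)) (snd z)) (g x) / rho_s mu0 Tr q g Psi h (g x) * pmf (rho mu0 Tr q g Psi h) x"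
    if z: "z \<in> set_pmf (D_xa mu0 Tr q g Psi h)" for z x
  proof (cases "rho_s mu0 Tr q g Psi h (g x) = 0")
    case True
    then have "x \<notin> set_pmf (rho mu0 Tr q g Psi h)"
      using rho_s_pos by force
    then have "x \<notin> set_pmf (obsT Tr q g (fst z) (snd z))"
      using z by (auto simp: rho_def case_prod_unfold)
    then show ?thesis
      using True by (simp add: set_pmf_iff pmf_rho)
  next
    case False
    then show ?thesis
      by (simp add: pmf_rho obsT_def pmf_bind_emission)
  qed
qed

lemma f_star_eq_odds_ratio:
  assumes "x' \<in> set_pmf (rho mu0 Tr q g Psi h)"
  shows "f_star mu0 Tr q g Psi h x a x'
       = pmf (Tr (g x) a) (g x') / rho_s mu0 Tr q g Psi h (g x')
         / (1 + pmf (Tr (g x) a) (g x') / rho_s mu0 Tr q g Psi h (g x'))"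
  using rho_s_pos[OF assms] by (simp add: f_star_def field_simps)

lemma expectation_D_coup_density_ratio_gap_le:
  fixes u :: "'x \<Rightarrow> 'a \<Rightarrow> 'x \<Rightarrow> real" and S :: "'x set" and \<Delta> :: real
  assumes u_const: "\<And>x a x1 x2. x1 \<in> S \<Longrightarrow> x2 \<in> S \<Longrightarrow> u x a x1 = u x a x2"
    and u_range: "\<And>x a x'. 0 \<le> u x a x' \<and> u x a x' \<le> 1"
    and err: "measure_pmf.expectation (D_dist mu0 Tr q g Psi h)
                (\<lambda>(x, a, x', y). (u x a x' - f_star mu0 Tr q g Psi h x a x')\<^sup>2) \<le> \<Delta>"
  shows "measure_pmf.expectation (D_coup mu0 Tr q g Psi h)
           (\<lambda>(x, a, x1', x2'). indicator S x1' * indicator S x2' * \<bar>V_fun mu0 Tr q g Psi h x1' x2' x a\<bar>)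
         \<le> 8 * sqrt (measure_pmf.prob (rho mu0 Tr q g Psi h) S * \<Delta>)"
proof -
  interpret mixture_density_ratio "D_xa mu0 Tr q g Psi h" "\<lambda>z. obsT Tr q g (fst z) (snd z)"
    "rho mu0 Tr q g Psi h" "\<lambda>z x. pmf (Tr (g (fst z)) (snd z)) (g x) / rho_s mu0 Tr q g Psi h (g x)"
    by (rule mixture_density_ratio_rho)
  have "0 \<le> measure_pmf.expectation (D_dist mu0 Tr q g Psi h)
                (\<lambda>(x, a, x', y). (u x a x' - f_star mu0 Tr q g Psi h x a x')\<^sup>2)"
    by (intro integral_nonneg_AE) (simp add: case_prod_unfold)
  with err have \<Delta>: "0 \<le> \<Delta>"
    by linarith
  have "measure_pmf.expectation (D_coup mu0 Tr q g Psi h)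
      (\<lambda>(x, a, x1', x2'). indicator S x1' * indicator S x2' * \<bar>V_fun mu0 Tr q g Psi h x1' x2' x a\<bar>)
    = enn2real (\<integral>\<^sup>+z. \<integral>\<^sup>+x1. \<integral>\<^sup>+x2. ennreal (indicator S x1 * indicator S x2
         * \<bar>pmf (Tr (g (fst z)) (snd z)) (g x1) / rho_s mu0 Tr q g Psi h (g x1)
            - pmf (Tr (g (fst z)) (snd z)) (g x2) / rho_s mu0 Tr q g Psi h (g x2)\<bar>)
         \<partial>rho mu0 Tr q g Psi h \<partial>rho mu0 Tr q g Psi h \<partial>D_xa mu0 Tr q g Psi h)"
    by (subst integral_eq_nn_integral) (auto simp: D_coup_def V_fun_def case_prod_unfold)
  also have "\<dots> \<le> 8 * sqrt (measure_pmf.prob (rho mu0 Tr q g Psi h) S * \<Delta>)"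
    by (rule enn2real_density_ratio_gap_le[where u = "\<lambda>z. u (fst z) (snd z)"
          and f = "\<lambda>z. f_star mu0 Tr q g Psi h (fst z) (snd z)",
          OF f_star_eq_odds_ratio u_const nn_integral_regression_error_le[OF u_range err] \<Delta>])
  finally show ?thesis .
qed

end

theorem mainTheorem13:
  fixes H h N n i :: nat
    and lvl :: "'s::finite \<Rightarrow> nat"
    and mu0 :: "'s pmf"
    and Tr :: "'s \<Rightarrow> 'a::finite \<Rightarrow> 's pmf"
    and q :: "'s \<Rightarrow> 'x::countable pmf"
    and g :: "'x \<Rightarrow> 's"
    and Psi :: "('x \<Rightarrow> 'a pmf) set"
    and \<alpha> \<delta> \<Delta> :: real
    and Phi :: "('x \<Rightarrow> nat) set"
    and samples :: "('x \<times> 'a \<times> 'x \<times> real) list"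
    and w_hat :: "nat \<Rightarrow> 'a \<Rightarrow> nat \<Rightarrow> real"
    and phiF phiB :: "'x \<Rightarrow> nat"
  assumes mdp: "block_mdp H lvl mu0 Tr q g"
    and h: "2 \<le> h" "h \<le> H"
    and Psi: "finite Psi" "Psi \<noteq> {}" "0 < \<alpha>" "policy_cover lvl mu0 Tr q g \<alpha> Psi (h - 1)"
    and \<delta>: "0 < \<delta>" "\<delta> < 1"
    and Phi: "finite Phi" "\<forall>\<phi>\<in>Phi. \<forall>x. \<phi> x \<in> {1..N}"
    and samples: "0 < n" "length samples = n" "set samples \<subseteq> set_pmf (D_dist mu0 Tr q g Psi h)"
    and fhat: "phiF \<in> Phi" "phiB \<in> Phi" "w_hat \<in> W_N N"
    and erm: "\<forall>f\<in>F_N Phi N.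
                (\<Sum>(x, a, x', y)\<leftarrow>samples. (w_hat (phiF x) a (phiB x') - y)^2)
              \<le> (\<Sum>(x, a, x', y)\<leftarrow>samples. (f (x, a, x') - y)^2)"
    and Delta: "\<Delta> = 16 * (ln (real (card Phi)) + real N ^ 2 * real (card (UNIV :: 'a set)) * ln (real n)
                           + ln (2 / \<delta>)) / real n"
    and err: "measure_pmf.expectation (D_dist mu0 Tr q g Psi h)
                (\<lambda>(x, a, x', y). (w_hat (phiF x) a (phiB x') - f_star mu0 Tr q g Psi h x a x')^2) \<le> \<Delta>"
    and i: "i \<in> {1..N}"
  shows "measure_pmf.expectation (D_coup mu0 Tr q g Psi h)
           (\<lambda>(x, a, x1', x2'). (if phiB x1' = i \<and> phiB x2' = i then 1 else 0)
                               * \<bar>V_fun mu0 Tr q g Psi h x1' x2' x a\<bar>)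
         \<le> 8 * sqrt (measure_pmf.prob (rho mu0 Tr q g Psi h) {x'. phiB x' = i} * \<Delta>)"
proof -
  (* Apart from decodability and 0 <= w_hat <= 1 only the regression bound err is used; the ERM
     property and the value of Delta merely explain where that bound comes from. *)
  have decoder: "\<forall>s. \<forall>x\<in>set_pmf (q s). g x = s"
    using mdp by (simp add: block_mdp_def)
  have w_hat_range: "0 \<le> w_hat (phiF x) a (phiB x') \<and> w_hat (phiF x) a (phiB x') \<le> 1" for x a x'
    using fhat Phi(2) unfolding W_N_def by blast
  have "(if phiB x1' = i \<and> phiB x2' = i then 1 else 0 :: real)
      = indicator {x'. phiB x' = i} x1' * indicator {x'. phiB x' = i} x2'" for x1' x2'
    by (simp add: indicator_def)
  then show ?thesis
    using expectation_D_coup_density_ratio_gap_le[OF decoder, where S = "{x'. phiB x' = i}"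
        and u = "\<lambda>x a x'. w_hat (phiF x) a (phiB x')"] w_hat_range err
    by simp
qed

end
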